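(* For infinitely many $n\in\mathbb{N}$ there exist matroids $M=(E,\mathcal{I})$ and $M'=(E,\mathcal{I}')$ over the same ground set $E$ with $|E|=n$ and a weight function $w:E\to\{0,1\}$ such that $M$ and $M'$ have exactly two common bases $B$ and $B'$, and these satisfy: (1) $w(B)=0$ and $w(B')=1$; (2) $B\cap B'=\emptyset$ and $|B|=|B'|=n/2$.
   Context: A common basis of $M$ and $M'$ is a set that is a basis of both. $w(S)=\sum_{e\in S}w(e)$. *)

theory Defs
  imports Main
begin

definition matroid :: "'a set \<Rightarrow> 'a set set \<Rightarrow> bool" where
  "matroid E Ind \<longleftrightarrow>
     finite E \<and>
     (\<forall>X\<in>Ind. X \<subseteq> E) \<and>
     {} \<in> Ind \<and>
     (\<forall>X Y. X \<in> Ind \<and> Y \<subseteq> X \<longrightarrow> Y \<in> Ind) \<and>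
     (\<forall>X Y. X \<in> Ind \<and> Y \<in> Ind \<and> card X < card Y \<longrightarrow>
        (\<exists>e\<in>Y - X. insert e X \<in> Ind))"

definition basis :: "'a set set \<Rightarrow> 'a set \<Rightarrow> bool" where
  "basis Ind B \<longleftrightarrow> B \<in> Ind \<and> (\<forall>X\<in>Ind. B \<subseteq> X \<longrightarrow> X = B)"

end

theory Submission
  imports Defs "HOL-Library.Infinite_Set"
begin

text \<open>Arrange \<open>E = {0, ..., 2k - 1}\<close> on a cycle and take the two partition matroids whose
  blocks are the edges \<open>{2i, 2i + 1}\<close>, respectively the edges \<open>{2i + 1, 2i + 2 mod 2k}\<close>, of
  this cycle. Every edge belongs to exactly one of the two partitions, so a common basis contains
  exactly one endpoint of every edge: it alternates along the cycle and is therefore the set of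
  even or the set of odd elements. The indicator of the element 1 then serves as weight.\<close>

definition partition_indep :: "'a set \<Rightarrow> ('a \<Rightarrow> 'b) \<Rightarrow> 'a set set" where
  "partition_indep E f = {X. X \<subseteq> E \<and> inj_on f X}"

lemma matroid_partition_indep:
  assumes "finite E"
  shows "matroid E (partition_indep E f)"
  unfolding matroid_def
proof (intro conjI allI impI)
  fix X Y assume XY: "X \<in> partition_indep E f \<and> Y \<in> partition_indep E f \<and> card X < card Y"
  then have X: "X \<subseteq> E" "inj_on f X" and "inj_on f Y"
    by (simp_all add: partition_indep_def)
  then have "card (f ` X) < card (f ` Y)"
    using XY by (simp add: card_image)
  moreover have "finite X"
    using X assms finite_subset by blast
  ultimately have "\<not> f ` Y \<subseteq> f ` X"
    by (meson card_mono finite_imageI not_le)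
  then obtain y where "y \<in> Y" "f y \<notin> f ` X"
    by blast
  then show "\<exists>e\<in>Y - X. insert e X \<in> partition_indep E f"
    using XY X by (intro bexI[of _ y]) (auto simp: partition_indep_def)
qed (use assms inj_on_subset in \<open>auto simp: partition_indep_def\<close>)

lemma basis_partition_indep_iff:
  "basis (partition_indep E f) S \<longleftrightarrow> S \<subseteq> E \<and> inj_on f S \<and> f ` E \<subseteq> f ` S"
proof
  assume S: "basis (partition_indep E f) S"
  then have indep: "S \<subseteq> E" "inj_on f S"
    by (auto simp: basis_def partition_indep_def)
  have "f e \<in> f ` S" if "e \<in> E" for e
  proof (rule ccontr)
    assume "f e \<notin> f ` S"
    then have "insert e S \<in> partition_indep E f" "e \<notin> S"
      using indep \<open>e \<in> E\<close> by (auto simp: partition_indep_def)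
    then show False
      using S unfolding basis_def by blast
  qed
  with indep show "S \<subseteq> E \<and> inj_on f S \<and> f ` E \<subseteq> f ` S"
    by blast
next
  assume S: "S \<subseteq> E \<and> inj_on f S \<and> f ` E \<subseteq> f ` S"
  have "X = S" if "inj_on f X" "X \<subseteq> E" "S \<subseteq> X" for X
    using S that by (metis dual_order.eq_iff image_mono inj_on_image_eq_iff)
  with S show "basis (partition_indep E f) S"
    by (auto simp: basis_def partition_indep_def)
qed

lemma basis_partition_indep_iff_partner:
  assumes partner: "\<And>e. e \<in> E \<Longrightarrow> p e \<in> E \<and> p e \<noteq> e"
    and fibre: "\<And>e e'. e \<in> E \<Longrightarrow> e' \<in> E \<Longrightarrow> f e' = f e \<longleftrightarrow> e' = e \<or> e' = p e"
  shows "basis (partition_indep E f) S \<longleftrightarrow> S \<subseteq> E \<and> (\<forall>e\<in>E. e \<in> S \<longleftrightarrow> p e \<notin> S)"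
proof (cases "S \<subseteq> E")
  case True
  have "inj_on f S \<longleftrightarrow> (\<forall>e\<in>S. p e \<notin> S)"
  proof
    assume inj: "inj_on f S"
    show "\<forall>e\<in>S. p e \<notin> S"
    proof (intro ballI notI)
      fix e assume e: "e \<in> S" "p e \<in> S"
      then have "e \<in> E"
        using True by blast
      then have "p e = e"
        using e fibre partner by (blast intro: inj_onD[OF inj])
      with \<open>e \<in> E\<close> partner show False
        by blast
    qed
  next
    assume "\<forall>e\<in>S. p e \<notin> S"
    then show "inj_on f S"
      using True fibre by (intro inj_onI) (metis subsetD)
  qed
  moreover have "f ` E \<subseteq> f ` S \<longleftrightarrow> (\<forall>e\<in>E. e \<in> S \<or> p e \<in> S)"
  proof
    assume "f ` E \<subseteq> f ` S"
    then show "\<forall>e\<in>E. e \<in> S \<or> p e \<in> S"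
      using True fibre by (fastforce simp: image_subset_iff)
  next
    assume "\<forall>e\<in>E. e \<in> S \<or> p e \<in> S"
    then show "f ` E \<subseteq> f ` S"
      using partner fibre by (metis image_eqI image_subsetI)
  qed
  moreover have "(\<forall>e\<in>S. p e \<notin> S) \<and> (\<forall>e\<in>E. e \<in> S \<or> p e \<in> S) \<longleftrightarrow> (\<forall>e\<in>E. e \<in> S \<longleftrightarrow> p e \<notin> S)"
    using True by auto
  ultimately show ?thesis
    using True by (simp add: basis_partition_indep_iff)
qed (simp add: basis_partition_indep_iff)

definition pair_partner :: "nat \<Rightarrow> nat" where
  "pair_partner x = (if even x then Suc x else x - 1)"

lemma div2_eq_iff_pair_partner: "y div 2 = x div 2 \<longleftrightarrow> y = x \<or> y = pair_partner x"
  unfolding pair_partner_def by presburger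

lemma pair_partner_less: "x < 2 * k \<Longrightarrow> pair_partner x < 2 * k"
  unfolding pair_partner_def by presburger

lemma even_pair_partner_iff: "even (pair_partner x) \<longleftrightarrow> odd x"
  unfolding pair_partner_def by presburger

definition cyclic_succ :: "nat \<Rightarrow> nat \<Rightarrow> nat" where
  "cyclic_succ n x = (if Suc x = n then 0 else Suc x)"

definition cyclic_pred :: "nat \<Rightarrow> nat \<Rightarrow> nat" where
  "cyclic_pred n x = (if x = 0 then n - 1 else x - 1)"

lemma cyclic_succ_less: "x < n \<Longrightarrow> cyclic_succ n x < n"
  unfolding cyclic_succ_def by simp

lemma cyclic_pred_less: "x < n \<Longrightarrow> cyclic_pred n x < n"
  unfolding cyclic_pred_def by auto

lemma cyclic_pred_succ: "x < n \<Longrightarrow> cyclic_pred n (cyclic_succ n x) = x"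
  unfolding cyclic_succ_def cyclic_pred_def by auto

lemma cyclic_succ_pred: "x < n \<Longrightarrow> cyclic_succ n (cyclic_pred n x) = x"
  by (cases x) (simp_all add: cyclic_succ_def cyclic_pred_def)

lemma even_cyclic_succ_iff: "x < n \<Longrightarrow> even n \<Longrightarrow> even (cyclic_succ n x) \<longleftrightarrow> odd x"
  unfolding cyclic_succ_def by auto

lemma even_cyclic_pred_iff: "x < n \<Longrightarrow> even n \<Longrightarrow> even (cyclic_pred n x) \<longleftrightarrow> odd x"
  unfolding cyclic_pred_def by (auto simp: even_diff_nat)

lemma basis_pair_partition_iff:
  "basis (partition_indep {..<2 * k} (\<lambda>x. x div 2)) S \<longleftrightarrow>
     S \<subseteq> {..<2 * k} \<and> (\<forall>x\<in>{..<2 * k}. x \<in> S \<longleftrightarrow> pair_partner x \<notin> S)"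
proof (rule basis_partition_indep_iff_partner)
  fix x assume "x \<in> {..<2 * k}"
  moreover have "pair_partner x \<noteq> x"
    using even_pair_partner_iff[of x] by auto
  ultimately show "pair_partner x \<in> {..<2 * k} \<and> pair_partner x \<noteq> x"
    by (simp add: pair_partner_less)
qed (rule div2_eq_iff_pair_partner)

definition rotated_pair_partner :: "nat \<Rightarrow> nat \<Rightarrow> nat" where
  "rotated_pair_partner k x = cyclic_pred (2 * k) (pair_partner (cyclic_succ (2 * k) x))"

lemma rotated_pair_partner_less: "x < 2 * k \<Longrightarrow> rotated_pair_partner k x < 2 * k"
  unfolding rotated_pair_partner_def by (intro cyclic_pred_less pair_partner_less cyclic_succ_less)

lemma even_rotated_pair_partner_iff:
  "x < 2 * k \<Longrightarrow> even (rotated_pair_partner k x) \<longleftrightarrow> odd x"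
  unfolding rotated_pair_partner_def
  by (simp add: even_cyclic_pred_iff pair_partner_less cyclic_succ_less even_pair_partner_iff
      even_cyclic_succ_iff)

lemma rotated_pair_partner_odd: "odd x \<Longrightarrow> Suc x < 2 * k \<Longrightarrow> rotated_pair_partner k x = Suc x"
  unfolding rotated_pair_partner_def cyclic_succ_def cyclic_pred_def pair_partner_def by simp

lemma basis_rotated_pair_partition_iff:
  "basis (partition_indep {..<2 * k} (\<lambda>x. cyclic_succ (2 * k) x div 2)) S \<longleftrightarrow>
     S \<subseteq> {..<2 * k} \<and> (\<forall>x\<in>{..<2 * k}. x \<in> S \<longleftrightarrow> rotated_pair_partner k x \<notin> S)"
proof (rule basis_partition_indep_iff_partner)
  fix x assume "x \<in> {..<2 * k}"
  then have "x < 2 * k" by simp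
  moreover have "rotated_pair_partner k x \<noteq> x"
    using even_rotated_pair_partner_iff[OF \<open>x < 2 * k\<close>] by auto
  ultimately show "rotated_pair_partner k x \<in> {..<2 * k} \<and> rotated_pair_partner k x \<noteq> x"
    by (simp add: rotated_pair_partner_less)
  fix y assume "y \<in> {..<2 * k}"
  then have "y < 2 * k" by simp
  have bound: "pair_partner (cyclic_succ (2 * k) x) < 2 * k"
    using \<open>x < 2 * k\<close> by (intro pair_partner_less cyclic_succ_less)
  have "cyclic_succ (2 * k) y = cyclic_succ (2 * k) x \<longleftrightarrow> y = x"
    using cyclic_pred_succ[OF \<open>x < 2 * k\<close>] cyclic_pred_succ[OF \<open>y < 2 * k\<close>] by auto
  moreover have "cyclic_succ (2 * k) y = pair_partner (cyclic_succ (2 * k) x) \<longleftrightarrow>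
      y = rotated_pair_partner k x"
    using cyclic_pred_succ[OF \<open>y < 2 * k\<close>] cyclic_succ_pred[OF bound]
    unfolding rotated_pair_partner_def by auto
  ultimately show "cyclic_succ (2 * k) y div 2 = cyclic_succ (2 * k) x div 2 \<longleftrightarrow>
      y = x \<or> y = rotated_pair_partner k x"
    by (simp add: div2_eq_iff_pair_partner)
qed

lemma alternating_subset_eq_parity_class:
  assumes "S \<subseteq> {..<n}" and alternating: "\<And>x. Suc x < n \<Longrightarrow> x \<in> S \<longleftrightarrow> Suc x \<notin> S"
  shows "S = {x. x < n \<and> (even x \<longleftrightarrow> 0 \<in> S)}"
proof -
  have "x \<in> S \<longleftrightarrow> (even x \<longleftrightarrow> 0 \<in> S)" if "x < n" for x
    using that by (induction x) (auto simp: alternating)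
  then show ?thesis
    using assms(1) by auto
qed

lemma common_bases_pair_partitions:
  "{S. basis (partition_indep {..<2 * k} (\<lambda>x. x div 2)) S \<and>
       basis (partition_indep {..<2 * k} (\<lambda>x. cyclic_succ (2 * k) x div 2)) S} =
   {{x. x < 2 * k \<and> even x}, {x. x < 2 * k \<and> odd x}}" (is "?L = ?R")
proof
  show "?L \<subseteq> ?R"
  proof
    fix S assume "S \<in> ?L"
    then have "basis (partition_indep {..<2 * k} (\<lambda>x. x div 2)) S"
      and "basis (partition_indep {..<2 * k} (\<lambda>x. cyclic_succ (2 * k) x div 2)) S"
      by simp_all
    then have S: "S \<subseteq> {..<2 * k}"
      and pairs: "\<forall>x\<in>{..<2 * k}. x \<in> S \<longleftrightarrow> pair_partner x \<notin> S"
      and rotated: "\<forall>x\<in>{..<2 * k}. x \<in> S \<longleftrightarrow> rotated_pair_partner k x \<notin> S"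
      unfolding basis_pair_partition_iff basis_rotated_pair_partition_iff by blast+
    have "x \<in> S \<longleftrightarrow> Suc x \<notin> S" if "Suc x < 2 * k" for x
    proof (cases "even x")
      case True
      then have "pair_partner x = Suc x"
        by (simp add: pair_partner_def)
      with pairs that show ?thesis
        by auto
    next
      case False
      then have "rotated_pair_partner k x = Suc x"
        using that by (simp add: rotated_pair_partner_odd)
      with rotated that show ?thesis
        by auto
    qed
    then have "S = {x. x < 2 * k \<and> (even x \<longleftrightarrow> 0 \<in> S)}"
      by (rule alternating_subset_eq_parity_class[OF S])
    then show "S \<in> ?R"
      by (cases "0 \<in> S") auto
  qed
next
  have "{x. x < 2 * k \<and> (even x \<longleftrightarrow> b)} \<in> ?L" for b
    unfolding mem_Collect_eq basis_pair_partition_iff basis_rotated_pair_partition_iff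
    using pair_partner_less even_pair_partner_iff rotated_pair_partner_less
      even_rotated_pair_partner_iff
    by auto
  from this[of True] this[of False] show "?R \<subseteq> ?L"
    by simp
qed

lemma card_parity_class: "card {x. x < 2 * k \<and> (even x \<longleftrightarrow> b)} = k"
proof (induction k)
  case (Suc k)
  have "{x. x < 2 * Suc k \<and> (even x \<longleftrightarrow> b)} =
      insert (2 * k + of_bool (\<not> b)) {x. x < 2 * k \<and> (even x \<longleftrightarrow> b)}"
    by (auto simp: less_Suc_eq)
  then show ?case
    using Suc.IH by simp
qed simp

theorem theorem19:
  shows "infinite {n :: nat. \<exists>(E :: nat set) Ind Ind' (w :: nat \<Rightarrow> nat) B B'.
     matroid E Ind \<and> matroid E Ind' \<and> card E = n \<and>
     (\<forall>e\<in>E. w e \<in> {0, 1}) \<and>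
     B \<noteq> B' \<and> {S. basis Ind S \<and> basis Ind' S} = {B, B'} \<and>
     (\<Sum>e\<in>B. w e) = 0 \<and> (\<Sum>e\<in>B'. w e) = 1 \<and>
     B \<inter> B' = {} \<and> 2 * card B = n \<and> 2 * card B' = n}" (is "infinite ?N")
proof -
  have witness: "2 * k \<in> ?N" if "0 < k" for k
  proof -
    let ?E = "{..<2 * k}"
    let ?B = "{x. x < 2 * k \<and> even x}" and ?B' = "{x. x < 2 * k \<and> odd x}"
    have "0 \<in> ?B - ?B'"
      using that by simp
    then have distinct: "?B \<noteq> ?B'"
      by blast
    have halves: "2 * card ?B = 2 * k" "2 * card ?B' = 2 * k"
      using card_parity_class[of k True] card_parity_class[of k False] by simp_all
    show ?thesis
      unfolding mem_Collect_eq
      by (rule exI[of _ ?E], rule exI[of _ "partition_indep ?E (\<lambda>x. x div 2)"],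
          rule exI[of _ "partition_indep ?E (\<lambda>x. cyclic_succ (2 * k) x div 2)"],
          rule exI[of _ "\<lambda>x. if x = 1 then 1 else 0"], rule exI[of _ ?B], rule exI[of _ ?B'])
        (use that distinct halves in \<open>auto simp: matroid_partition_indep common_bases_pair_partitions\<close>)
  qed
  show ?thesis
    unfolding infinite_nat_iff_unbounded_le
  proof
    fix m
    show "\<exists>n\<ge>m. n \<in> ?N"
      using witness[of "Suc m"] by (intro exI[of _ "2 * Suc m"]) auto
  qed
qed

end
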